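(* For each $i\in\{1,\dots,m\}$ let $A_i:\mathbb{R}^n\rightrightarrows\mathbb{R}^n$ be a maximally monotone symmetric linear relation. Then the infimal convolution $f=q_{A_1}\,\square\cdots\square\,q_{A_m}$ is a generalized linear-quadratic function and $$\partial f=\Big(\sum_{i=1}^mA_i^{-1}\Big)^{-1},$$ the parallel sum of the $A_i$.
   Context: A linear relation is an operator $\mathbb{R}^n\rightrightarrows\mathbb{R}^n$ whose graph is a linear subspace; monotone: $\langle x^*-y^*,x-y\rangle\ge0$ on the graph; maximally monotone: no monotone operator with strictly larger graph; symmetric: $\langle x,y^*\rangle=\langle y,x^*\rangle$ for all $(x,x^* ),(y,y^* )$ in the graph. Inverses are set-valued; sums are pointwise Minkowski sums. For a monotone linear relation $B$, $q_B(x)=\frac12\langle x,Bx\rangle$ on $\operatorname{dom}B$ and $\infty$ elsewhere. Infimal convolution: $(g\,\square\,h)(x)=\inf_y\{g(y)+h(x-y)\}$. $\partial$ denotes the Fenchel subdifferential. A generalized linear-quadratic function is one of the form $x\mapsto\frac12\langle x-a,B(x-a)\rangle+\langle b,x\rangle+c$ with $B$ a linear relation. *)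

theory Defs
  imports "HOL-Analysis.Analysis" "HOL-Library.Extended_Real"
begin

text \<open>Set-valued operators on R^n are represented by their graphs.\<close>
type_synonym 'n rel = "((real^'n) \<times> (real^'n)) set"

definition linear_relation :: "('n::finite) rel \<Rightarrow> bool" where
  "linear_relation A \<longleftrightarrow> subspace A"

definition monotone_rel :: "('n::finite) rel \<Rightarrow> bool" where
  "monotone_rel A \<longleftrightarrow>
     (\<forall>x x' y y'. (x, x') \<in> A \<longrightarrow> (y, y') \<in> A \<longrightarrow> 0 \<le> (x' - y') \<bullet> (x - y))"

definition maximally_monotone :: "('n::finite) rel \<Rightarrow> bool" where
  "maximally_monotone A \<longleftrightarrow> monotone_rel A \<and>
     (\<forall>B. monotone_rel B \<longrightarrow> A \<subseteq> B \<longrightarrow> B = A)"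

definition symmetric_rel :: "('n::finite) rel \<Rightarrow> bool" where
  "symmetric_rel A \<longleftrightarrow>
     (\<forall>x x' y y'. (x, x') \<in> A \<longrightarrow> (y, y') \<in> A \<longrightarrow> x \<bullet> y' = y \<bullet> x')"

text \<open>q_B(x) = 1/2 <x, Bx> on dom B (any element of Bx; the value is independent of
  the choice for monotone linear relations), +\<infinity> elsewhere.\<close>
definition qB :: "('n::finite) rel \<Rightarrow> real^'n::finite \<Rightarrow> ereal" where
  "qB B x = (if x \<in> Domain B then ereal (1/2 * (x \<bullet> (SOME y. (x, y) \<in> B))) else \<infinity>)"

definition infconv :: "nat \<Rightarrow> (nat \<Rightarrow> real^'n::finite \<Rightarrow> ereal) \<Rightarrow> real^'n \<Rightarrow> ereal" where
  "infconv m F x = Inf {(\<Sum>i\<in>{1..m}. F i (y i)) | y. (\<Sum>i\<in>{1..m}. y i) = x}"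

definition rel_sum :: "nat \<Rightarrow> (nat \<Rightarrow> ('n::finite) rel) \<Rightarrow> ('n::finite) rel" where
  "rel_sum m A = {(x, \<Sum>i\<in>{1..m}. y i) | x y. \<forall>i\<in>{1..m}. (x, y i) \<in> A i}"

definition subdiff :: "(real^'n::finite \<Rightarrow> ereal) \<Rightarrow> ('n::finite) rel" where
  "subdiff f = {(x, s). \<bar>f x\<bar> \<noteq> \<infinity> \<and>
                   (\<forall>y. f y \<ge> f x + ereal (s \<bullet> (y - x)))}"

definition gen_linear_quadratic :: "(real^'n::finite \<Rightarrow> ereal) \<Rightarrow> bool" where
  "gen_linear_quadratic f \<longleftrightarrow>
     (\<exists>B a b c. linear_relation B \<and> monotone_rel B \<and>
        (\<forall>x. f x = qB B (x - a) + ereal (b \<bullet> x + c)))"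

end

theory Submission
  imports Defs
begin

text \<open>
  A maximally monotone symmetric linear relation A is Lagrangian: it equals its orthogonal
  complement for the symplectic form <x, w> - <y, u> on R^n \<times> R^n. Indeed maximality forces
  A 0 to be the orthogonal complement of dom A, and symmetry does the rest. Lagrangian relations
  are closed under inversion and under sums (by finite-dimensional duality, the orthogonal
  complement of dom S \<inter> dom T is the sum of those of dom S and dom T), so the parallel sum P of
  the A_i is Lagrangian, and it is monotone.

  If x = x_1 + ... + x_m with one u in every A_i x_i, then u is a common subgradient of the
  convex quadratics q_{A_i} at the x_i, so this decomposition attains the infimum, with value
  q_P(x); points outside dom P have no decomposition of finite cost, because every sum of
  points of the dom A_i lies in dom P. Hence the infimal convolution is q_P, and for a monotone
  Lagrangian P a subgradient of q_P at x differs from an element of P x by a vector orthogonal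
  to dom P, i.e. by an element of P 0, so that the subdifferential of q_P is P.
\<close>

section \<open>Orthogonal complements\<close>

lemma mem_orthogonal_comp: "e \<in> W\<^sup>\<bottom> \<longleftrightarrow> (\<forall>x\<in>W. x \<bullet> e = 0)"
  unfolding orthogonal_comp_def orthogonal_def by simp

lemma orthogonal_comp_Int:
  fixes U V :: "'a::euclidean_space set"
  assumes "subspace U" "subspace V"
  shows "(U \<inter> V)\<^sup>\<bottom> = U\<^sup>\<bottom> + V\<^sup>\<bottom>"
proof -
  have "U\<^sup>\<bottom> + V\<^sup>\<bottom> = {x + y | x y. x \<in> U\<^sup>\<bottom> \<and> y \<in> V\<^sup>\<bottom>}"
    by (auto simp: set_plus_def)
  then have sum: "subspace (U\<^sup>\<bottom> + V\<^sup>\<bottom>)"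
    using subspace_sums[OF subspace_orthogonal_comp subspace_orthogonal_comp] by simp
  have "(U\<^sup>\<bottom> + V\<^sup>\<bottom>)\<^sup>\<bottom> = U \<inter> V"
  proof
    have "U\<^sup>\<bottom> \<union> V\<^sup>\<bottom> \<subseteq> U\<^sup>\<bottom> + V\<^sup>\<bottom>"
      using set_plus_intro[of _ "U\<^sup>\<bottom>" 0 "V\<^sup>\<bottom>"] set_plus_intro[of 0 "U\<^sup>\<bottom>" _ "V\<^sup>\<bottom>"]
        subspace_0[OF subspace_orthogonal_comp] by fastforce
    then show "(U\<^sup>\<bottom> + V\<^sup>\<bottom>)\<^sup>\<bottom> \<subseteq> U \<inter> V"
      using orthogonal_comp_anti_mono orthogonal_comp_self assms by blast
    show "U \<inter> V \<subseteq> (U\<^sup>\<bottom> + V\<^sup>\<bottom>)\<^sup>\<bottom>"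
    proof
      fix x assume x: "x \<in> U \<inter> V"
      have "c \<bullet> x = 0" if "c \<in> U\<^sup>\<bottom> + V\<^sup>\<bottom>" for c
      proof -
        obtain a b where "a \<in> U\<^sup>\<bottom>" "b \<in> V\<^sup>\<bottom>" "c = a + b"
          using \<open>c \<in> U\<^sup>\<bottom> + V\<^sup>\<bottom>\<close> by (auto simp: set_plus_def)
        moreover from x this have "a \<bullet> x = 0" "b \<bullet> x = 0"
          by (auto simp: orthogonal_comp_def orthogonal_def inner_commute)
        ultimately show ?thesis
          by (simp add: inner_add_left)
      qed
      then show "x \<in> (U\<^sup>\<bottom> + V\<^sup>\<bottom>)\<^sup>\<bottom>"
        by (simp add: mem_orthogonal_comp)
    qed
  qed
  then show ?thesis
    using orthogonal_comp_self[OF sum] by simp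
qed

section \<open>Linear relations and Lagrangian subspaces\<close>

lemma subspace_Domain: "subspace A \<Longrightarrow> subspace (Domain A)"
  unfolding Domain_fst by (rule linear_subspace_image[OF linear_fst])

lemma monotone_rel_iff_inner_nonneg:
  assumes "subspace A"
  shows "monotone_rel A \<longleftrightarrow> (\<forall>(x, u)\<in>A. 0 \<le> u \<bullet> x)"
proof
  assume "monotone_rel A"
  moreover have "(0, 0) \<in> A"
    using subspace_0[OF assms] by (simp add: zero_prod_def)
  ultimately show "\<forall>(x, u)\<in>A. 0 \<le> u \<bullet> x"
    unfolding monotone_rel_def by fastforce
next
  assume nonneg: "\<forall>(x, u)\<in>A. 0 \<le> u \<bullet> x"
  show "monotone_rel A"
    unfolding monotone_rel_def
  proof (intro allI impI)
    fix x x' y y' assume "(x, x') \<in> A" "(y, y') \<in> A"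
    then have "(x - y, x' - y') \<in> A"
      using subspace_diff[OF assms] by fastforce
    then show "0 \<le> (x' - y') \<bullet> (x - y)"
      using nonneg by blast
  qed
qed

lemma monotone_rel_inner_nonneg:
  "subspace A \<Longrightarrow> monotone_rel A \<Longrightarrow> (x, u) \<in> A \<Longrightarrow> 0 \<le> u \<bullet> x"
  using monotone_rel_iff_inner_nonneg by blast

definition symplectic_orth :: "('n::finite) rel \<Rightarrow> 'n rel" where
  "symplectic_orth T = {(y, w). \<forall>(x, u)\<in>T. x \<bullet> w = y \<bullet> u}"

definition lagrangian :: "('n::finite) rel \<Rightarrow> bool" where
  "lagrangian T \<longleftrightarrow> symplectic_orth T = T"

lemma mem_symplectic_orth:
  "(y, w) \<in> symplectic_orth T \<longleftrightarrow> (\<forall>x u. (x, u) \<in> T \<longrightarrow> x \<bullet> w = y \<bullet> u)"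
  unfolding symplectic_orth_def by auto

lemma subspace_symplectic_orth: "subspace (symplectic_orth T)"
  unfolding subspace_def zero_prod_def
  by (auto simp: mem_symplectic_orth inner_add_right inner_add_left)

lemma symplectic_orth_converse: "symplectic_orth (converse T) = converse (symplectic_orth T)"
  by (auto simp: mem_symplectic_orth) (metis inner_commute)+

lemma symmetric_rel_iff_subset_symplectic_orth: "symmetric_rel T \<longleftrightarrow> T \<subseteq> symplectic_orth T"
  unfolding symmetric_rel_def symplectic_orth_def by auto

lemma lagrangian_imp_subspace: "lagrangian T \<Longrightarrow> subspace T"
  using subspace_symplectic_orth[of T] unfolding lagrangian_def by simp

lemma lagrangian_imp_symmetric: "lagrangian T \<Longrightarrow> symmetric_rel T"
  unfolding lagrangian_def symmetric_rel_iff_subset_symplectic_orth by simp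

lemma lagrangian_iff_subset: "lagrangian T \<longleftrightarrow> symmetric_rel T \<and> symplectic_orth T \<subseteq> T"
  unfolding lagrangian_def symmetric_rel_iff_subset_symplectic_orth by auto

lemma lagrangian_Image_zero:
  assumes "lagrangian T"
  shows "(0, z) \<in> T \<longleftrightarrow> z \<in> (Domain T)\<^sup>\<bottom>"
proof -
  have "(0, z) \<in> T \<longleftrightarrow> (0, z) \<in> symplectic_orth T"
    using assms unfolding lagrangian_def by simp
  then show ?thesis
    by (auto simp: mem_symplectic_orth mem_orthogonal_comp)
qed

lemma lagrangian_Domain:
  assumes "lagrangian T"
  shows "Domain T = {z. (0, z) \<in> T}\<^sup>\<bottom>"
  using orthogonal_comp_self[OF subspace_Domain[OF lagrangian_imp_subspace[OF assms]]]
  by (simp add: lagrangian_Image_zero[OF assms])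

lemma lagrangian_converse: "lagrangian T \<Longrightarrow> lagrangian (converse T)"
  unfolding lagrangian_def symplectic_orth_converse by simp

lemma maximally_monotone_orthogonal_Domain:
  assumes "linear_relation A" "maximally_monotone A" "z \<in> (Domain A)\<^sup>\<bottom>"
  shows "(0, z) \<in> A"
proof -
  have A: "subspace A" "monotone_rel A"
    using assms(1,2) unfolding linear_relation_def maximally_monotone_def by auto
  define B where "B = {(y, w + e) | y w e. (y, w) \<in> A \<and> e \<in> (Domain A)\<^sup>\<bottom>}"
  have "monotone_rel B"
    unfolding monotone_rel_def
  proof (intro allI impI)
    fix x x' y y' assume "(x, x') \<in> B" "(y, y') \<in> B"
    then obtain w1 e1 w2 e2 where "x' = w1 + e1" "(x, w1) \<in> A" "e1 \<in> (Domain A)\<^sup>\<bottom>"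
        "y' = w2 + e2" "(y, w2) \<in> A" "e2 \<in> (Domain A)\<^sup>\<bottom>"
      unfolding B_def by blast
    moreover from this have diff: "(x - y, w1 - w2) \<in> A"
      using subspace_diff[OF A(1)] by fastforce
    moreover from diff have "x - y \<in> Domain A" by blast
    moreover have "e1 - e2 \<in> (Domain A)\<^sup>\<bottom>"
      using \<open>e1 \<in> _\<close> \<open>e2 \<in> _\<close> subspace_diff[OF subspace_orthogonal_comp] by blast
    ultimately have "0 \<le> (w1 - w2) \<bullet> (x - y)" "(x - y) \<bullet> (e1 - e2) = 0"
      using A by (auto simp: monotone_rel_iff_inner_nonneg mem_orthogonal_comp)
    with \<open>x' = w1 + e1\<close> \<open>y' = w2 + e2\<close> show "0 \<le> (x' - y') \<bullet> (x - y)"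
      by (simp add: inner_commute algebra_simps)
  qed
  moreover have "A \<subseteq> B"
    unfolding B_def using subspace_0[OF subspace_orthogonal_comp] by force
  ultimately have "B = A"
    using assms(2) unfolding maximally_monotone_def by blast
  moreover have "(0, 0 + z) \<in> B"
    unfolding B_def using subspace_0[OF A(1)] assms(3) by (force simp: zero_prod_def)
  ultimately show ?thesis by simp
qed

lemma maximally_monotone_symmetric_lagrangian:
  assumes lin: "linear_relation A" and max: "maximally_monotone A" and sym: "symmetric_rel A"
  shows "lagrangian A"
  unfolding lagrangian_iff_subset
proof (intro conjI sym subrelI)
  have sub: "subspace A"
    using lin unfolding linear_relation_def .
  have kernel: "(0, e) \<in> A" if "e \<in> (Domain A)\<^sup>\<bottom>" for e
    using maximally_monotone_orthogonal_Domain[OF lin max that] .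
  fix y w assume yw: "(y, w) \<in> symplectic_orth A"
  have "y \<bullet> e = 0" if "e \<in> (Domain A)\<^sup>\<bottom>" for e
    using yw kernel[OF that] unfolding mem_symplectic_orth by (metis inner_zero_left)
  then have "y \<in> (Domain A)\<^sup>\<bottom>\<^sup>\<bottom>"
    by (simp add: mem_orthogonal_comp inner_commute)
  then obtain w0 where w0: "(y, w0) \<in> A"
    using orthogonal_comp_self[OF subspace_Domain[OF sub]] by blast
  have "x \<bullet> (w - w0) = 0" if "(x, u) \<in> A" for x u
  proof -
    have "x \<bullet> w = y \<bullet> u"
      using yw that unfolding mem_symplectic_orth by blast
    moreover have "y \<bullet> u = x \<bullet> w0"
      using sym w0 that unfolding symmetric_rel_def by blast
    ultimately show ?thesis
      by (simp add: inner_diff_right)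
  qed
  then have "w - w0 \<in> (Domain A)\<^sup>\<bottom>"
    by (auto simp: mem_orthogonal_comp)
  then have "(y, w0) + (0, w - w0) \<in> A"
    using kernel w0 subspace_add[OF sub] by blast
  then show "(y, w) \<in> A" by simp
qed

definition rel_add :: "('n::finite) rel \<Rightarrow> 'n rel \<Rightarrow> 'n rel" where
  "rel_add S T = {(x, u + v) | x u v. (x, u) \<in> S \<and> (x, v) \<in> T}"

lemma lagrangian_rel_add:
  assumes S: "lagrangian S" and T: "lagrangian T"
  shows "lagrangian (rel_add S T)"
  unfolding lagrangian_iff_subset
proof (intro conjI subrelI)
  have symS: "x \<bullet> u' = x' \<bullet> u" if "(x, u) \<in> S" "(x', u') \<in> S" for x u x' u'
    using lagrangian_imp_symmetric[OF S] that unfolding symmetric_rel_def by blast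
  have symT: "x \<bullet> v' = x' \<bullet> v" if "(x, v) \<in> T" "(x', v') \<in> T" for x v x' v'
    using lagrangian_imp_symmetric[OF T] that unfolding symmetric_rel_def by blast
  show "symmetric_rel (rel_add S T)"
    unfolding symmetric_rel_def
  proof (intro allI impI)
    fix x w x' w' assume "(x, w) \<in> rel_add S T" "(x', w') \<in> rel_add S T"
    then obtain u v u' v' where "w = u + v" "(x, u) \<in> S" "(x, v) \<in> T"
        "w' = u' + v'" "(x', u') \<in> S" "(x', v') \<in> T"
      unfolding rel_add_def by blast
    moreover from this have "x \<bullet> u' = x' \<bullet> u" "x \<bullet> v' = x' \<bullet> v"
      using symS symT by blast+
    ultimately show "x \<bullet> w' = x' \<bullet> w"
      by (simp add: inner_add_right)
  qed
  fix y w assume yw: "(y, w) \<in> symplectic_orth (rel_add S T)"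
  have orth: "x \<bullet> w = y \<bullet> u + y \<bullet> v" if "(x, u) \<in> S" "(x, v) \<in> T" for x u v
  proof -
    have "(x, u + v) \<in> rel_add S T"
      using that unfolding rel_add_def by blast
    then show ?thesis
      using yw unfolding mem_symplectic_orth by (simp add: inner_add_right)
  qed
  have subS: "subspace S" and subT: "subspace T"
    using S T by (simp_all add: lagrangian_imp_subspace)
  have zero: "(0, 0) \<in> S" "(0, 0) \<in> T"
    using subspace_0[OF subS] subspace_0[OF subT] by (simp_all add: zero_prod_def)
  have "e \<bullet> y = 0" if "(0, e) \<in> S" for e
    using orth[OF that zero(2)] by (simp add: inner_commute)
  moreover have "e \<bullet> y = 0" if "(0, e) \<in> T" for e
    using orth[OF zero(1) that] by (simp add: inner_commute)
  ultimately have "y \<in> {e. (0, e) \<in> S}\<^sup>\<bottom>" "y \<in> {e. (0, e) \<in> T}\<^sup>\<bottom>"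
    by (simp_all add: mem_orthogonal_comp)
  then obtain u1 u2 where u1: "(y, u1) \<in> S" and u2: "(y, u2) \<in> T"
    unfolding lagrangian_Domain[OF S, symmetric] lagrangian_Domain[OF T, symmetric] by blast
  have "x \<bullet> (w - u1 - u2) = 0" if x: "x \<in> Domain S \<inter> Domain T" for x
  proof -
    obtain a b where "(x, a) \<in> S" "(x, b) \<in> T"
      using x by blast
    then have "x \<bullet> w = y \<bullet> a + y \<bullet> b" "y \<bullet> a = x \<bullet> u1" "y \<bullet> b = x \<bullet> u2"
      using orth symS[OF u1] symT[OF u2] by blast+
    then show ?thesis
      by (simp add: inner_diff_right)
  qed
  then have "w - u1 - u2 \<in> (Domain S)\<^sup>\<bottom> + (Domain T)\<^sup>\<bottom>"
    unfolding orthogonal_comp_Int[OF subspace_Domain[OF subS] subspace_Domain[OF subT], symmetric]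
    by (simp add: mem_orthogonal_comp)
  then obtain e1 e2 where e: "(0, e1) \<in> S" "(0, e2) \<in> T" and "w = (u1 + e1) + (u2 + e2)"
    by (auto simp: set_plus_def algebra_simps lagrangian_Image_zero[OF S]
        lagrangian_Image_zero[OF T])
  moreover have "(y, u1 + e1) \<in> S" "(y, u2 + e2) \<in> T"
    using subspace_add[OF subS u1 e(1)] subspace_add[OF subT u2 e(2)] by simp_all
  ultimately show "(y, w) \<in> rel_add S T"
    unfolding rel_add_def by blast
qed

lemma rel_sum_0: "rel_sum 0 B = UNIV \<times> {0}"
  unfolding rel_sum_def by auto

lemma rel_sum_Suc: "rel_sum (Suc m) B = rel_add (rel_sum m B) (B (Suc m))"
proof (intro subset_antisym subrelI)
  fix x w assume "(x, w) \<in> rel_sum (Suc m) B"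
  then obtain y where "w = (\<Sum>i\<in>{1..m}. y i) + y (Suc m)" "\<forall>i\<in>{1..Suc m}. (x, y i) \<in> B i"
    unfolding rel_sum_def by auto
  then show "(x, w) \<in> rel_add (rel_sum m B) (B (Suc m))"
    unfolding rel_add_def rel_sum_def by fastforce
next
  fix x w assume "(x, w) \<in> rel_add (rel_sum m B) (B (Suc m))"
  then obtain y v where "w = (\<Sum>i\<in>{1..m}. y i) + v" "\<forall>i\<in>{1..m}. (x, y i) \<in> B i"
      "(x, v) \<in> B (Suc m)"
    unfolding rel_add_def rel_sum_def by auto
  moreover have "(\<Sum>i\<in>{1..m}. (y(Suc m := v)) i) = (\<Sum>i\<in>{1..m}. y i)"
    by (intro sum.cong) auto
  ultimately have "w = (\<Sum>i\<in>{1..Suc m}. (y(Suc m := v)) i)"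
      "\<forall>i\<in>{1..Suc m}. (x, (y(Suc m := v)) i) \<in> B i"
    by (auto simp: le_Suc_eq)
  then show "(x, w) \<in> rel_sum (Suc m) B"
    unfolding rel_sum_def by blast
qed

lemma lagrangian_UNIV_Times_zero: "lagrangian (UNIV \<times> {0})"
  unfolding lagrangian_def by (auto simp: mem_symplectic_orth) (metis inner_eq_zero_iff)

lemma lagrangian_rel_sum: "\<forall>i\<in>{1..m}. lagrangian (B i) \<Longrightarrow> lagrangian (rel_sum m B)"
  by (induction m) (simp_all add: rel_sum_0 rel_sum_Suc lagrangian_UNIV_Times_zero lagrangian_rel_add)

definition parallel_sum :: "nat \<Rightarrow> (nat \<Rightarrow> ('n::finite) rel) \<Rightarrow> 'n rel" where
  "parallel_sum m A = converse (rel_sum m (\<lambda>i. converse (A i)))"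

lemma mem_parallel_sum:
  "(x, u) \<in> parallel_sum m A \<longleftrightarrow>
    (\<exists>xs. x = (\<Sum>i\<in>{1..m}. xs i) \<and> (\<forall>i\<in>{1..m}. (xs i, u) \<in> A i))"
  unfolding parallel_sum_def rel_sum_def by auto

lemma lagrangian_parallel_sum:
  "\<forall>i\<in>{1..m}. lagrangian (A i) \<Longrightarrow> lagrangian (parallel_sum m A)"
  unfolding parallel_sum_def by (simp add: lagrangian_converse lagrangian_rel_sum)

lemma monotone_parallel_sum:
  assumes "\<forall>i\<in>{1..m}. subspace (A i) \<and> monotone_rel (A i)" "subspace (parallel_sum m A)"
  shows "monotone_rel (parallel_sum m A)"
  unfolding monotone_rel_iff_inner_nonneg[OF assms(2)]
proof (intro ballI, clarify)
  fix x u assume "(x, u) \<in> parallel_sum m A"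
  then obtain xs where "x = (\<Sum>i\<in>{1..m}. xs i)" and xs: "\<forall>i\<in>{1..m}. (xs i, u) \<in> A i"
    unfolding mem_parallel_sum by blast
  moreover have "0 \<le> u \<bullet> xs i" if "i \<in> {1..m}" for i
    using assms(1) xs that monotone_rel_inner_nonneg by blast
  ultimately show "0 \<le> u \<bullet> x"
    by (auto simp: inner_sum_right intro!: sum_nonneg)
qed

section \<open>Quadratic forms of monotone symmetric relations\<close>

lemma quadratic_nonneg_imp_linear_coeff_zero:
  fixes a b :: real
  assumes "\<And>t. 0 \<le> t * a + t\<^sup>2 * b"
  shows "a = 0"
proof (rule ccontr)
  assume "a \<noteq> 0"
  define e where "e = 1 / (\<bar>b\<bar> + 1)"
  have "e > 0" "e * b < 1"
    unfolding e_def by (auto simp: field_simps abs_if)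
  have "(- e * a) * a + (- e * a)\<^sup>2 * b = e * a\<^sup>2 * (e * b - 1)"
    by (simp add: power2_eq_square algebra_simps)
  also have "\<dots> < 0"
    using \<open>e > 0\<close> \<open>e * b < 1\<close> \<open>a \<noteq> 0\<close> by (simp add: mult_pos_neg)
  finally show False
    using assms[of "- e * a"] by simp
qed

lemma mem_subdiff:
  "(x, s) \<in> subdiff f \<longleftrightarrow> \<bar>f x\<bar> \<noteq> \<infinity> \<and> (\<forall>y. f x + ereal (s \<bullet> (y - x)) \<le> f y)"
  unfolding subdiff_def by simp

lemma qB_eq:
  assumes "symmetric_rel B" "(x, u) \<in> B"
  shows "qB B x = ereal (1/2 * (x \<bullet> u))"
proof -
  have "(x, SOME v. (x, v) \<in> B) \<in> B"
    using someI[of "\<lambda>v. (x, v) \<in> B"] assms(2) .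
  then have "x \<bullet> (SOME v. (x, v) \<in> B) = x \<bullet> u"
    using assms unfolding symmetric_rel_def by blast
  then show ?thesis
    unfolding qB_def using assms(2) by auto
qed

lemma qB_notin_Domain: "x \<notin> Domain B \<Longrightarrow> qB B x = \<infinity>"
  unfolding qB_def by simp

lemma qB_nonneg:
  assumes "subspace B" "monotone_rel B"
  shows "0 \<le> qB B x"
proof (cases "x \<in> Domain B")
  case True
  then have "(x, SOME v. (x, v) \<in> B) \<in> B"
    by (auto intro: someI)
  then show ?thesis
    unfolding qB_def using True monotone_rel_inner_nonneg[OF assms] by (simp add: inner_commute)
qed (simp add: qB_notin_Domain)

lemma rel_subset_subdiff_qB:
  assumes sub: "subspace B" and mono: "monotone_rel B" and sym: "symmetric_rel B"
  shows "B \<subseteq> subdiff (qB B)"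
proof (rule subrelI)
  fix x u assume xu: "(x, u) \<in> B"
  have "qB B x + ereal (u \<bullet> (y - x)) \<le> qB B y" for y
  proof (cases "y \<in> Domain B")
    case True
    then obtain w where yw: "(y, w) \<in> B" by blast
    then have "(y - x, w - u) \<in> B"
      using subspace_diff[OF sub _ xu] by fastforce
    then have "0 \<le> (w - u) \<bullet> (y - x)"
      using monotone_rel_inner_nonneg[OF sub mono] by blast
    moreover have "x \<bullet> w = y \<bullet> u"
      using sym xu yw unfolding symmetric_rel_def by blast
    ultimately have "1/2 * (x \<bullet> u) + u \<bullet> (y - x) \<le> 1/2 * (y \<bullet> w)"
      by (simp add: inner_diff_right inner_commute algebra_simps)
    then show ?thesis
      using qB_eq[OF sym xu] qB_eq[OF sym yw] by simp
  qed (simp add: qB_notin_Domain)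
  then show "(x, u) \<in> subdiff (qB B)"
    unfolding mem_subdiff using qB_eq[OF sym xu] by simp
qed

lemma subgradient_qB_orthogonal_Domain:
  assumes sub: "subspace B" and sym: "symmetric_rel B"
    and subgrad: "(x, s) \<in> subdiff (qB B)" and xu: "(x, u) \<in> B"
  shows "s - u \<in> (Domain B)\<^sup>\<bottom>"
  unfolding mem_orthogonal_comp
proof
  fix d assume "d \<in> Domain B"
  then obtain e where de: "(d, e) \<in> B" by blast
  have "0 \<le> t * (d \<bullet> u - d \<bullet> s) + t\<^sup>2 * (1/2 * (d \<bullet> e))" for t
  proof -
    have "(x + t *\<^sub>R d, u + t *\<^sub>R e) \<in> B"
      using subspace_add[OF sub xu subspace_scale[OF sub de]] by simp
    moreover have "qB B x + ereal (s \<bullet> (x + t *\<^sub>R d - x)) \<le> qB B (x + t *\<^sub>R d)"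
      using subgrad unfolding mem_subdiff by blast
    ultimately have "1/2 * (x \<bullet> u) + t * (s \<bullet> d) \<le> 1/2 * ((x + t *\<^sub>R d) \<bullet> (u + t *\<^sub>R e))"
      using qB_eq[OF sym xu] qB_eq[OF sym] by simp
    moreover have "x \<bullet> e = d \<bullet> u"
      using sym xu de unfolding symmetric_rel_def by blast
    ultimately show ?thesis
      by (simp add: inner_add_left inner_add_right inner_commute power2_eq_square algebra_simps)
  qed
  then have "d \<bullet> u - d \<bullet> s = 0"
    by (rule quadratic_nonneg_imp_linear_coeff_zero)
  then show "d \<bullet> (s - u) = 0"
    by (simp add: inner_diff_right)
qed

lemma inner_zero_imp_orthogonal_Domain:
  assumes sub: "subspace B" and mono: "monotone_rel B" and sym: "symmetric_rel B"
    and xu: "(x, u) \<in> B" and "x \<bullet> u = 0"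
  shows "u \<in> (Domain B)\<^sup>\<bottom>"
proof -
  \<comment> \<open>x minimizes the nonnegative form q_B, so 0 is a subgradient at x.\<close>
  have "qB B x = 0"
    using qB_eq[OF sym xu] \<open>x \<bullet> u = 0\<close> by (simp add: zero_ereal_def)
  then have "(x, 0) \<in> subdiff (qB B)"
    unfolding mem_subdiff using qB_nonneg[OF sub mono] by (simp add: zero_ereal_def)
  then have "0 - u \<in> (Domain B)\<^sup>\<bottom>"
    by (rule subgradient_qB_orthogonal_Domain[OF sub sym _ xu])
  then show ?thesis
    using subspace_neg[OF subspace_orthogonal_comp] by fastforce
qed

lemma subdiff_qB_lagrangian:
  assumes lag: "lagrangian P" and mono: "monotone_rel P"
  shows "subdiff (qB P) = P"
proof
  have sub: "subspace P" and sym: "symmetric_rel P"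
    using lag by (simp_all add: lagrangian_imp_subspace lagrangian_imp_symmetric)
  show "P \<subseteq> subdiff (qB P)"
    by (rule rel_subset_subdiff_qB[OF sub mono sym])
  show "subdiff (qB P) \<subseteq> P"
  proof (rule subrelI)
    fix x s assume subgrad: "(x, s) \<in> subdiff (qB P)"
    have "x \<in> Domain P"
    proof (rule ccontr)
      assume "x \<notin> Domain P"
      then show False
        using subgrad by (simp add: mem_subdiff qB_notin_Domain)
    qed
    then obtain u where xu: "(x, u) \<in> P" by blast
    have "(0, s - u) \<in> P"
      using subgradient_qB_orthogonal_Domain[OF sub sym subgrad xu] lagrangian_Image_zero[OF lag]
      by blast
    then have "(x, u) + (0, s - u) \<in> P"
      using subspace_add[OF sub xu] by blast
    then show "(x, s) \<in> P" by simp
  qed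
qed

section \<open>Infimal convolution\<close>

lemma infconv_eq_if_common_subgradient:
  assumes "\<forall>i\<in>{1..m}. (xs i, u) \<in> subdiff (F i)"
  shows "infconv m F (\<Sum>i\<in>{1..m}. xs i) = (\<Sum>i\<in>{1..m}. F i (xs i))"
  unfolding infconv_def
proof (rule antisym)
  show "Inf {\<Sum>i\<in>{1..m}. F i (y i) | y. (\<Sum>i\<in>{1..m}. y i) = (\<Sum>i\<in>{1..m}. xs i)}
      \<le> (\<Sum>i\<in>{1..m}. F i (xs i))"
    by (rule Inf_lower) blast
next
  show "(\<Sum>i\<in>{1..m}. F i (xs i))
      \<le> Inf {\<Sum>i\<in>{1..m}. F i (y i) | y. (\<Sum>i\<in>{1..m}. y i) = (\<Sum>i\<in>{1..m}. xs i)}"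
  proof (rule Inf_greatest, clarify)
    fix y assume y: "(\<Sum>i\<in>{1..m}. y i) = (\<Sum>i\<in>{1..m}. xs i)"
    have "(\<Sum>i\<in>{1..m}. u \<bullet> (y i - xs i)) = 0"
      using y by (simp add: inner_sum_right[symmetric] sum_subtractf)
    then have "(\<Sum>i\<in>{1..m}. F i (xs i)) = (\<Sum>i\<in>{1..m}. F i (xs i) + ereal (u \<bullet> (y i - xs i)))"
      by (simp add: sum.distrib)
    also have "\<dots> \<le> (\<Sum>i\<in>{1..m}. F i (y i))"
      using assms unfolding mem_subdiff by (intro sum_mono) blast
    finally show "(\<Sum>i\<in>{1..m}. F i (xs i)) \<le> (\<Sum>i\<in>{1..m}. F i (y i))" .
  qed
qed

lemma infconv_eq_PInf:
  assumes "\<And>y. (\<Sum>i\<in>{1..m}. y i) = x \<Longrightarrow> \<exists>i\<in>{1..m}. F i (y i) = \<infinity>"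
  shows "infconv m F x = \<infinity>"
  unfolding infconv_def top_ereal_def[symmetric] Inf_top_conv
  using assms by (auto simp: sum_Pinfty top_ereal_def)

lemma Domain_parallel_sum:
  assumes A: "\<forall>i\<in>{1..m}. subspace (A i) \<and> monotone_rel (A i) \<and> symmetric_rel (A i)"
    and lag: "lagrangian (parallel_sum m A)"
    and y: "\<forall>i\<in>{1..m}. y i \<in> Domain (A i)"
  shows "(\<Sum>i\<in>{1..m}. y i) \<in> Domain (parallel_sum m A)"
  unfolding lagrangian_Domain[OF lag] mem_orthogonal_comp
proof (clarify)
  fix z assume "(0, z) \<in> parallel_sum m A"
  then obtain xs where xs_sum: "(\<Sum>i\<in>{1..m}. xs i) = 0" and xs: "\<forall>i\<in>{1..m}. (xs i, z) \<in> A i"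
    unfolding mem_parallel_sum by metis
  have nonneg: "\<forall>i\<in>{1..m}. 0 \<le> z \<bullet> xs i"
    using A xs monotone_rel_inner_nonneg by blast
  have "(\<Sum>i\<in>{1..m}. z \<bullet> xs i) = 0"
    using xs_sum by (simp add: inner_sum_right[symmetric])
  then have "\<forall>i\<in>{1..m}. xs i \<bullet> z = 0"
    using nonneg sum_nonneg_eq_0_iff[of "{1..m}" "\<lambda>i. z \<bullet> xs i"] by (simp add: inner_commute)
  then have "\<forall>i\<in>{1..m}. z \<in> (Domain (A i))\<^sup>\<bottom>"
    using A xs inner_zero_imp_orthogonal_Domain by blast
  then have "\<forall>i\<in>{1..m}. y i \<bullet> z = 0"
    using y by (simp add: mem_orthogonal_comp)
  then have "(\<Sum>i\<in>{1..m}. y i) \<bullet> z = 0"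
    by (simp add: inner_sum_left sum.neutral)
  then show "z \<bullet> (\<Sum>i\<in>{1..m}. y i) = 0"
    by (simp add: inner_commute)
qed

lemma infconv_qB_parallel_sum:
  assumes A: "\<forall>i\<in>{1..m}. subspace (A i) \<and> monotone_rel (A i) \<and> symmetric_rel (A i)"
    and lag: "lagrangian (parallel_sum m A)"
  shows "infconv m (\<lambda>i. qB (A i)) = qB (parallel_sum m A)"
proof
  fix x
  show "infconv m (\<lambda>i. qB (A i)) x = qB (parallel_sum m A) x"
  proof (cases "x \<in> Domain (parallel_sum m A)")
    case True
    then obtain u where xu: "(x, u) \<in> parallel_sum m A" by blast
    then obtain xs where x: "x = (\<Sum>i\<in>{1..m}. xs i)" and xs: "\<forall>i\<in>{1..m}. (xs i, u) \<in> A i"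
      unfolding mem_parallel_sum by blast
    have "\<forall>i\<in>{1..m}. (xs i, u) \<in> subdiff (qB (A i))"
      using A xs rel_subset_subdiff_qB by blast
    then have "infconv m (\<lambda>i. qB (A i)) x = (\<Sum>i\<in>{1..m}. qB (A i) (xs i))"
      unfolding x by (rule infconv_eq_if_common_subgradient)
    also have "\<dots> = (\<Sum>i\<in>{1..m}. ereal (1/2 * (xs i \<bullet> u)))"
      by (rule sum.cong[OF refl]) (use A xs qB_eq in blast)
    also have "\<dots> = ereal (1/2 * (x \<bullet> u))"
      unfolding x by (simp add: inner_sum_left sum_distrib_left)
    also have "\<dots> = qB (parallel_sum m A) x"
      using qB_eq[OF lagrangian_imp_symmetric[OF lag] xu] by simp
    finally show ?thesis .
  next
    case False
    then have "\<exists>i\<in>{1..m}. qB (A i) (y i) = \<infinity>" if "(\<Sum>i\<in>{1..m}. y i) = x" for y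
      using that Domain_parallel_sum[OF A lag, of y] qB_notin_Domain by blast
    then have "infconv m (\<lambda>i. qB (A i)) x = \<infinity>"
      by (rule infconv_eq_PInf)
    then show ?thesis
      using False by (simp add: qB_notin_Domain)
  qed
qed

theorem proposition4p29:
  fixes A :: "nat \<Rightarrow> ('n::finite) rel" and m :: nat
  assumes "m \<ge> 1"
    and "\<forall>i\<in>{1..m}. linear_relation (A i) \<and> maximally_monotone (A i) \<and> symmetric_rel (A i)"
  shows "gen_linear_quadratic (infconv m (\<lambda>i. qB (A i)))
    \<and> subdiff (infconv m (\<lambda>i. qB (A i))) = converse (rel_sum m (\<lambda>i. converse (A i)))"
proof -
  define P where "P = parallel_sum m A"
  have A: "\<forall>i\<in>{1..m}. subspace (A i) \<and> monotone_rel (A i) \<and> symmetric_rel (A i)"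
    using assms(2) unfolding linear_relation_def maximally_monotone_def by blast
  have lag: "lagrangian P"
    unfolding P_def using assms(2)
    by (simp add: lagrangian_parallel_sum maximally_monotone_symmetric_lagrangian)
  have sub: "subspace P"
    using lag by (rule lagrangian_imp_subspace)
  have mono: "monotone_rel P"
    unfolding P_def using A sub[unfolded P_def] by (simp add: monotone_parallel_sum)
  have inf: "infconv m (\<lambda>i. qB (A i)) = qB P"
    unfolding P_def using A lag[unfolded P_def] by (rule infconv_qB_parallel_sum)
  have "gen_linear_quadratic (qB P)"
    unfolding gen_linear_quadratic_def linear_relation_def
    by (rule exI[of _ P], rule exI[of _ 0], rule exI[of _ 0], rule exI[of _ 0]) (simp add: sub mono)
  moreover have "subdiff (qB P) = converse (rel_sum m (\<lambda>i. converse (A i)))"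
    using subdiff_qB_lagrangian[OF lag mono] unfolding P_def parallel_sum_def .
  ultimately show ?thesis
    unfolding inf by simp
qed

end
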